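(* Let $k$ be a field, $\lambda\in k$, and let $A$ be either $k[x]/(x^2-\lambda)$ or $k[x]/(x^2-x-\lambda)$. Equip $A$ with its universal calculus, which is free as a left module on $\omega=\mathrm{d}x$ with relation $\omega x=-x\omega$ in the first case and $\omega x=\omega-x\omega$ in the second case, and with $\Omega^2=A\,\mathrm{Vol}$ free on $\mathrm{Vol}=\omega\wedge\omega$, $\mathrm{d}\omega=0$. Then: (a) $\mathrm{Vol}$ is central, and every element $g\,\omega\otimes\omega$ ($g\in A$) of $\Omega^1\otimes_A\Omega^1$ is central; no nonzero such element is quantum symmetric. (b) The only torsion free left connection on $\Omega^1$ is $\nabla\omega=0$; it is a bimodule connection with $\sigma(\omega\otimes\omega)=-\omega\otimes\omega$. (c) For invertible $g\in A$, the metric $g\,\omega\otimes\omega$ admits a quantum Levi-Civita connection if and only if $g\in k\setminus\{0\}$, in which case the QLC is unique and equals $\nabla\omega=0$.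
   Context: A differential calculus on a unital algebra $A$ is an $A$-bimodule $\Omega^1$ with $\mathrm{d}:A\to\Omega^1$ satisfying the Leibniz rule and with $\Omega^1$ spanned by elements $a\,\mathrm{d}b$; it is extended to degree 2 by a bimodule $\Omega^2$, an associative product $\wedge$ and $\mathrm{d}:\Omega^1\to\Omega^2$ with $\mathrm{d}^2=0$ and the graded Leibniz rule. An element $g\in\Omega^1\otimes_A\Omega^1$ is central if $ag=ga$ for all $a\in A$; quantum symmetric if $\wedge(g)=0$; it is a (quantum) metric if invertible, i.e. there is a bimodule map $(\ ,\ ):\Omega^1\otimes_A\Omega^1\to A$ with $((\eta,\ )\otimes\mathrm{id})g=\eta=(\mathrm{id}\otimes(\ ,\eta))g$ for all $\eta\in\Omega^1$. A left connection is a linear $\nabla:\Omega^1\to\Omega^1\otimes_A\Omega^1$ with $\nabla(a\omega)=a\nabla\omega+\mathrm{d}a\otimes\omega$; a bimodule connection additionally has a bimodule map $\sigma$ with $\nabla(\omega a)=(\nabla\omega)a+\sigma(\omega\otimes\mathrm{d}a)$. $\nabla$ is torsion free if $\wedge\nabla=\mathrm{d}$ on $\Omega^1$, and metric compatible if $(\nabla\otimes\mathrm{id})g+(\sigma\otimes\mathrm{id})(\mathrm{id}\otimes\nabla)g=0$. A quantum Levi-Civita connection (QLC) for $g$ is a torsion free, metric compatible bimodule connection. *)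

theory Defs
  imports "HOL-Computational_Algebra.Polynomial"
begin

text \<open>
The Boolean parameter c selects the case: c = True means p = x^2 - lam,
c = False means p = x^2 - x - lam.  Elements of A are represented by their
reduced representatives, i.e. polynomials of degree < 2; multiplication is
multiplication of polynomials modulo p.

Omega^1 is free as a left A-module on omega = dx, so an element a omega is
represented by its coefficient a in A.  Likewise Omega^1 (x)_A Omega^1 is free on
omega (x) omega, Omega^1 (x)_A Omega^1 (x)_A Omega^1 on omega (x) omega (x) omega,
and Omega^2 is free on Vol = omega ^ omega: elements are represented by their
coefficients in A.
\<close>

definition relP :: "bool \<Rightarrow> 'k::field \<Rightarrow> 'k poly" where
  "relP c l = (if c then [:-l, 0, 1:] else [:-l, -1, 1:])"


definition Alg :: "bool \<Rightarrow> 'k::field \<Rightarrow> 'k poly set" where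
  "Alg c l = {q. degree q < 2}"

definition mA :: "bool \<Rightarrow> 'k::field \<Rightarrow> 'k poly \<Rightarrow> 'k poly \<Rightarrow> 'k poly" where
  "mA c l a b = (a * b) mod relP c l"

text \<open>The defining relation omega x = r omega: r = -x in the first case,
  r = 1 - x in the second case.\<close>
definition omx :: "bool \<Rightarrow> 'k::field poly" where
  "omx c = (if c then [:0, -1:] else [:1, -1:])"

text \<open>Commutation omega a = th(a) omega, for a = a0 + a1 x (follows from the relation).\<close>
definition th :: "bool \<Rightarrow> 'k::field poly \<Rightarrow> 'k poly" where
  "th c a = [:coeff a 0:] + smult (coeff a 1) (omx c)"

text \<open>Universal differential: d(a0 + a1 x) = a1 dx = a1 omega (coefficient of omega).\<close>
definition dA :: "'k::field poly \<Rightarrow> 'k poly" where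
  "dA a = [:coeff a 1:]"

text \<open>Right action on Omega^1: (q omega) a = q th(a) omega.\<close>
definition rOm :: "bool \<Rightarrow> 'k::field \<Rightarrow> 'k poly \<Rightarrow> 'k poly \<Rightarrow> 'k poly" where
  "rOm c l q a = mA c l q (th c a)"

text \<open>Tensor product Omega^1 x Omega^1 \<rightarrow> Omega^1 (x)_A Omega^1:
  (p omega) (x) (q omega) = p th(q) omega (x) omega.\<close>
definition tns :: "bool \<Rightarrow> 'k::field \<Rightarrow> 'k poly \<Rightarrow> 'k poly \<Rightarrow> 'k poly" where
  "tns c l p q = mA c l p (th c q)"

text \<open>Right action on Omega^1 (x)_A Omega^1: (h omega(x)omega) a = h th(th(a)) omega(x)omega.\<close>
definition rT :: "bool \<Rightarrow> 'k::field \<Rightarrow> 'k poly \<Rightarrow> 'k poly \<Rightarrow> 'k poly" where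
  "rT c l h a = mA c l h (th c (th c a))"

text \<open>Right action on Omega^2: (h Vol) a = h th(th(a)) Vol.\<close>
definition rV :: "bool \<Rightarrow> 'k::field \<Rightarrow> 'k poly \<Rightarrow> 'k poly \<Rightarrow> 'k poly" where
  "rV c l h a = mA c l h (th c (th c a))"

text \<open>Wedge product Omega^1 x Omega^1 \<rightarrow> Omega^2: (p omega) ^ (q omega) = p th(q) Vol.
  On Omega^1 (x)_A Omega^1, h omega (x) omega = (h omega) (x) omega maps to wedge1 h 1.\<close>
definition wedge1 :: "bool \<Rightarrow> 'k::field \<Rightarrow> 'k poly \<Rightarrow> 'k poly \<Rightarrow> 'k poly" where
  "wedge1 c l p q = mA c l p (th c q)"

text \<open>Exterior derivative on Omega^1: d(q omega) = dq ^ omega + q d omega, with d omega = 0.\<close>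
definition dOm :: "bool \<Rightarrow> 'k::field \<Rightarrow> 'k poly \<Rightarrow> 'k poly" where
  "dOm c l q = wedge1 c l (dA q) 1"

text \<open>Triple tensor products:
  (h omega(x)omega) (x) (q omega) = h th(th(q)) omega(x)omega(x)omega, and
  (p omega) (x) (h omega(x)omega) = p th(h) omega(x)omega(x)omega.\<close>
definition t21 :: "bool \<Rightarrow> 'k::field \<Rightarrow> 'k poly \<Rightarrow> 'k poly \<Rightarrow> 'k poly" where
  "t21 c l h q = mA c l h (th c (th c q))"

definition t12 :: "bool \<Rightarrow> 'k::field \<Rightarrow> 'k poly \<Rightarrow> 'k poly \<Rightarrow> 'k poly" where
  "t12 c l p h = mA c l p (th c h)"

definition vol_central :: "bool \<Rightarrow> 'k::field \<Rightarrow> bool" where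
  "vol_central c l \<longleftrightarrow> (\<forall>a\<in>Alg c l. mA c l a 1 = rV c l 1 a)"

definition central_T :: "bool \<Rightarrow> 'k::field \<Rightarrow> 'k poly \<Rightarrow> bool" where
  "central_T c l h \<longleftrightarrow> (\<forall>a\<in>Alg c l. mA c l a h = rT c l h a)"

definition qsym :: "bool \<Rightarrow> 'k::field \<Rightarrow> 'k poly \<Rightarrow> bool" where
  "qsym c l h \<longleftrightarrow> wedge1 c l h 1 = 0"

text \<open>Left connection, represented by N with nabla(q omega) = N(q) omega (x) omega.\<close>
definition left_conn :: "bool \<Rightarrow> 'k::field \<Rightarrow> ('k poly \<Rightarrow> 'k poly) \<Rightarrow> bool" where
  "left_conn c l N \<longleftrightarrow>
     (\<forall>q\<in>Alg c l. N q \<in> Alg c l) \<and>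
     (\<forall>q\<in>Alg c l. \<forall>r\<in>Alg c l. N (q + r) = N q + N r) \<and>
     (\<forall>t q. q \<in> Alg c l \<longrightarrow> N (smult t q) = smult t (N q)) \<and>
     (\<forall>a\<in>Alg c l. \<forall>q\<in>Alg c l. N (mA c l a q) = mA c l a (N q) + tns c l (dA a) q)"

definition bimod_map_T :: "bool \<Rightarrow> 'k::field \<Rightarrow> ('k poly \<Rightarrow> 'k poly) \<Rightarrow> bool" where
  "bimod_map_T c l S \<longleftrightarrow>
     (\<forall>h\<in>Alg c l. S h \<in> Alg c l) \<and>
     (\<forall>h\<in>Alg c l. \<forall>h'\<in>Alg c l. S (h + h') = S h + S h') \<and>
     (\<forall>a\<in>Alg c l. \<forall>h\<in>Alg c l. S (mA c l a h) = mA c l a (S h)) \<and>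
     (\<forall>a\<in>Alg c l. \<forall>h\<in>Alg c l. S (rT c l h a) = rT c l (S h) a)"

definition bimod_conn :: "bool \<Rightarrow> 'k::field \<Rightarrow> ('k poly \<Rightarrow> 'k poly) \<Rightarrow> ('k poly \<Rightarrow> 'k poly) \<Rightarrow> bool" where
  "bimod_conn c l N S \<longleftrightarrow> left_conn c l N \<and> bimod_map_T c l S \<and>
     (\<forall>q\<in>Alg c l. \<forall>a\<in>Alg c l.
        N (rOm c l q a) = rT c l (N q) a + S (tns c l q (dA a)))"

definition torsion_free :: "bool \<Rightarrow> 'k::field \<Rightarrow> ('k poly \<Rightarrow> 'k poly) \<Rightarrow> bool" where
  "torsion_free c l N \<longleftrightarrow> (\<forall>q\<in>Alg c l. wedge1 c l (N q) 1 = dOm c l q)"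

text \<open>Metric compatibility for the element g omega (x) omega = (g omega) (x) omega:
  (nabla (x) id) g + (sigma (x) id)(id (x) nabla) g = 0.\<close>
definition metric_compat :: "bool \<Rightarrow> 'k::field \<Rightarrow> 'k poly \<Rightarrow> ('k poly \<Rightarrow> 'k poly) \<Rightarrow> ('k poly \<Rightarrow> 'k poly) \<Rightarrow> bool" where
  "metric_compat c l g N S \<longleftrightarrow>
     t21 c l (N g) 1 + t21 c l (S (t12 c l g (N 1))) 1 = 0"

definition QLC :: "bool \<Rightarrow> 'k::field \<Rightarrow> 'k poly \<Rightarrow> ('k poly \<Rightarrow> 'k poly) \<Rightarrow> bool" where
  "QLC c l g N \<longleftrightarrow> (\<exists>S. bimod_conn c l N S \<and> torsion_free c l N \<and> metric_compat c l g N S)"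

text \<open>Invertibility in A, and quantum metric (existence of the inverse bimodule map
  ( , ) : Omega^1 (x)_A Omega^1 \<rightarrow> A).\<close>
definition invertibleA :: "bool \<Rightarrow> 'k::field \<Rightarrow> 'k poly \<Rightarrow> bool" where
  "invertibleA c l g \<longleftrightarrow> (\<exists>h\<in>Alg c l. mA c l g h = 1)"

definition is_qmetric :: "bool \<Rightarrow> 'k::field \<Rightarrow> 'k poly \<Rightarrow> bool" where
  "is_qmetric c l g \<longleftrightarrow> (\<exists>B.
     (\<forall>h\<in>Alg c l. B h \<in> Alg c l) \<and>
     (\<forall>h\<in>Alg c l. \<forall>h'\<in>Alg c l. B (h + h') = B h + B h') \<and>
     (\<forall>a\<in>Alg c l. \<forall>h\<in>Alg c l. B (mA c l a h) = mA c l a (B h)) \<and>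
     (\<forall>a\<in>Alg c l. \<forall>h\<in>Alg c l. B (rT c l h a) = mA c l (B h) a) \<and>
     (\<forall>\<eta>\<in>Alg c l. mA c l (B (tns c l \<eta> g)) 1 = \<eta>) \<and>
     (\<forall>\<eta>\<in>Alg c l. rOm c l g (B (tns c l 1 \<eta>)) = \<eta>))"

end

theory Submission imports Defs begin

text \<open>
  Everything reduces to coefficient computations in the two-dimensional commutative algebra A,
  on which th (given by \<open>\<omega> a = th(a) \<omega>\<close>) is an involutive automorphism.
  By the Leibniz rule a left connection is determined by \<open>\<nabla>\<omega>\<close>, and torsion freeness forces
  \<open>\<nabla>\<omega> = 0\<close>, i.e. \<open>\<nabla>(q\<omega>) = dq \<otimes> \<omega>\<close>. The bimodule rule for \<open>\<nabla>(\<omega> x)\<close> then pins down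
  \<open>\<sigma>(\<omega>\<otimes>\<omega>) = -\<omega>\<otimes>\<omega>\<close>, so that metric compatibility of \<open>g \<omega>\<otimes>\<omega>\<close> collapses to \<open>dg = 0\<close>:
  the metric must be constant.
\<close>

lemma Alg_eq_pCons: "q \<in> Alg c l \<Longrightarrow> q = [:coeff q 0, coeff q 1:]"
proof (rule poly_eqI)
  fix n assume "q \<in> Alg c l"
  then have "degree q < 2" by (simp add: Alg_def)
  then show "coeff q n = coeff [:coeff q 0, coeff q 1:] n"
    by (auto simp: coeff_pCons coeff_eq_0 split: nat.split)
qed

lemma pCons_in_Alg [simp]: "[:u, v:] \<in> Alg c l"
  by (simp add: Alg_def degree_pCons_eq_if)

lemma const_in_Alg [simp]: "[:u:] \<in> Alg c l"
  by (simp add: Alg_def)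

lemma one_in_Alg [simp]: "1 \<in> Alg c l"
  by (simp add: Alg_def)

lemma zero_in_Alg [simp]: "0 \<in> Alg c l"
  by (simp add: Alg_def)

lemma uminus_in_Alg [simp]: "h \<in> Alg c l \<Longrightarrow> - h \<in> Alg c l"
  by (simp add: Alg_def)

lemma plus_in_Alg [simp]: "h \<in> Alg c l \<Longrightarrow> k \<in> Alg c l \<Longrightarrow> h + k \<in> Alg c l"
  using degree_add_le_max[of h k] by (auto simp: Alg_def)

lemma degree_relP: "degree (relP c l) = 2"
  by (simp add: relP_def degree_pCons_eq_if)

lemma mA_pCons:
  "mA c l [:a0, a1:] [:b0, b1:] =
     [:a0 * b0 + l * a1 * b1, a0 * b1 + a1 * b0 + (if c then 0 else a1 * b1):]"
    (is "_ = ?r")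
proof -
  have prod: "[:a0, a1:] * [:b0, b1:] = ?r + [:a1 * b1:] * relP c l"
    by (cases c) (simp_all add: relP_def algebra_simps)
  have "degree ?r < degree (relP c l)"
    by (simp add: degree_relP degree_pCons_eq_if)
  then show ?thesis
    unfolding mA_def prod mod_mult_self1 by (rule mod_poly_less)
qed

lemma mA_in_Alg [simp]: "mA c l a b \<in> Alg c l"
proof -
  have "relP c l \<noteq> 0" using degree_relP[of c l] by auto
  then show ?thesis
    using degree_mod_less[of "relP c l" "a * b"] by (auto simp: mA_def Alg_def degree_relP)
qed

lemma mA_eq:
  "a \<in> Alg c l \<Longrightarrow> b \<in> Alg c l \<Longrightarrow> mA c l a b =
     [:coeff a 0 * coeff b 0 + l * coeff a 1 * coeff b 1,
       coeff a 0 * coeff b 1 + coeff a 1 * coeff b 0 + (if c then 0 else coeff a 1 * coeff b 1):]"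
  by (metis Alg_eq_pCons mA_pCons)

lemma mA_commute: "a \<in> Alg c l \<Longrightarrow> b \<in> Alg c l \<Longrightarrow> mA c l a b = mA c l b a"
  by (simp add: mA_eq algebra_simps)

lemma mA_assoc:
  "a \<in> Alg c l \<Longrightarrow> b \<in> Alg c l \<Longrightarrow> d \<in> Alg c l \<Longrightarrow>
     mA c l (mA c l a b) d = mA c l a (mA c l b d)"
  by (simp add: mA_eq algebra_simps)

lemma mA_add_left:
  "a \<in> Alg c l \<Longrightarrow> b \<in> Alg c l \<Longrightarrow> d \<in> Alg c l \<Longrightarrow>
     mA c l (a + b) d = mA c l a d + mA c l b d"
  by (simp add: mA_eq algebra_simps)

lemma mA_uminus_right: "a \<in> Alg c l \<Longrightarrow> b \<in> Alg c l \<Longrightarrow> mA c l a (- b) = - mA c l a b"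
  by (simp add: mA_eq algebra_simps)

lemma mA_one_right [simp]: "a \<in> Alg c l \<Longrightarrow> mA c l a 1 = a"
  by (subst (2) Alg_eq_pCons) (simp_all add: mA_eq)

lemma mA_one_left [simp]: "a \<in> Alg c l \<Longrightarrow> mA c l 1 a = a"
  by (simp add: mA_commute[of 1])

lemma mA_zero [simp]: "mA c l a 0 = 0" "mA c l 0 a = 0"
  by (simp_all add: mA_def)

lemma th_eq: "th c a = [:coeff a 0 + (if c then 0 else coeff a 1), - coeff a 1:]"
  by (simp add: th_def omx_def)

lemma th_in_Alg [simp]: "th c a \<in> Alg c l"
  by (simp add: th_eq)

lemma th_one [simp]: "th c 1 = 1"
  by (simp add: th_eq one_pCons)

lemma th_zero [simp]: "th c 0 = 0"
  by (simp add: th_eq)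

lemma th_th [simp]: "a \<in> Alg c l \<Longrightarrow> th c (th c a) = a"
  by (subst (2) Alg_eq_pCons) (simp_all add: th_eq)

lemma th_mA: "a \<in> Alg c l \<Longrightarrow> b \<in> Alg c l \<Longrightarrow> th c (mA c l a b) = mA c l (th c a) (th c b)"
  by (cases c) (simp_all add: mA_eq th_eq algebra_simps)

lemma dA_in_Alg [simp]: "dA a \<in> Alg c l"
  by (simp add: dA_def)

lemma Vol_central: "vol_central c l"
  by (simp add: vol_central_def rV_def)

lemma central_T_all: "h \<in> Alg c l \<Longrightarrow> central_T c l h"
  by (auto simp: central_T_def rT_def mA_commute)

lemma not_qsym: "h \<in> Alg c l \<Longrightarrow> h \<noteq> 0 \<Longrightarrow> \<not> qsym c l h"
  by (simp add: qsym_def wedge1_def)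

lemma left_conn_eq:
  assumes N: "left_conn c l N" and q: "q \<in> Alg c l"
  shows "N q = mA c l q (N 1) + dA q"
proof -
  have "N (mA c l q 1) = mA c l q (N 1) + tns c l (dA q) 1"
    using N q one_in_Alg unfolding left_conn_def by blast
  then show ?thesis
    using q by (simp add: tns_def)
qed

lemma torsion_free_iff_eq_dA:
  "left_conn c l N \<Longrightarrow> torsion_free c l N \<longleftrightarrow> (\<forall>q\<in>Alg c l. N q = dA q)"
  by (simp add: torsion_free_def wedge1_def dOm_def left_conn_def)

lemma torsion_free_iff_N_one:
  assumes N: "left_conn c l N"
  shows "torsion_free c l N \<longleftrightarrow> N 1 = 0"
proof
  assume "torsion_free c l N"
  then have "N 1 = dA 1"
    using N by (simp add: torsion_free_iff_eq_dA)
  then show "N 1 = 0"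
    by (simp add: dA_def)
next
  assume N_one: "N 1 = 0"
  have "N q = dA q" if "q \<in> Alg c l" for q
    using left_conn_eq[OF N that] N_one that by simp
  then show "torsion_free c l N"
    using N by (simp add: torsion_free_iff_eq_dA)
qed

lemma left_conn_dA: "left_conn c l dA"
  unfolding left_conn_def by (cases c) (auto simp: tns_def dA_def mA_eq th_eq algebra_simps)

lemma torsion_free_dA: "torsion_free c l dA"
  by (simp add: torsion_free_iff_eq_dA[OF left_conn_dA])

lemma bimod_map_T_uminus: "bimod_map_T c l uminus"
  by (simp add: bimod_map_T_def rT_def mA_uminus_right mA_commute)

lemma bimod_conn_uminus:
  assumes N: "left_conn c l N" and tf: "torsion_free c l N"
  shows "bimod_conn c l N uminus"
proof -
  have N_eq: "N q = dA q" if "q \<in> Alg c l" for q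
    using N tf that by (simp add: torsion_free_iff_eq_dA)
  have "N (rOm c l q a) = rT c l (N q) a - tns c l q (dA a)" if "q \<in> Alg c l" "a \<in> Alg c l" for q a
    using that by (simp add: N_eq rOm_def rT_def tns_def dA_def mA_eq th_eq algebra_simps)
  then show ?thesis
    using N bimod_map_T_uminus by (simp add: bimod_conn_def)
qed

text \<open>The bimodule rule applied to \<open>\<nabla>(\<omega> x) = \<nabla>(th(x) \<omega>)\<close> determines \<open>\<sigma>(\<omega>\<otimes>\<omega>)\<close>.\<close>
lemma bimod_conn_sigma_eq_uminus:
  assumes N: "left_conn c l N" and tf: "torsion_free c l N" and bc: "bimod_conn c l N S"
    and h: "h \<in> Alg c l"
  shows "S h = - h"
proof -
  have N_eq: "N q = dA q" if "q \<in> Alg c l" for q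
    using N tf that by (simp add: torsion_free_iff_eq_dA)
  have "N (rOm c l 1 [:0, 1:]) = rT c l (N 1) [:0, 1:] + S (tns c l 1 (dA [:0, 1:]))"
    using bc by (simp add: bimod_conn_def)
  moreover have "N (rOm c l 1 [:0, 1:]) = - 1"
  proof -
    have "N (rOm c l 1 [:0, 1:]) = [:-1:]"
      by (simp add: rOm_def N_eq th_eq dA_def)
    then show ?thesis
      by (simp add: one_pCons)
  qed
  moreover have "tns c l 1 (dA [:0, 1:]) = 1"
    by (simp add: tns_def dA_def one_pCons[symmetric])
  ultimately have S_one: "S 1 = - 1"
    using N_eq[of 1] by (simp add: rT_def dA_def)
  have "S (mA c l h 1) = mA c l h (S 1)"
    using bc h one_in_Alg unfolding bimod_conn_def bimod_map_T_def by blast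
  then show ?thesis
    using h by (simp add: S_one mA_uminus_right)
qed

lemma QLC_eq_dA: "QLC c l g N \<Longrightarrow> q \<in> Alg c l \<Longrightarrow> N q = dA q"
  by (auto simp: QLC_def bimod_conn_def torsion_free_iff_eq_dA)

lemma QLC_imp_dA_eq_0:
  assumes g: "g \<in> Alg c l" and Q: "QLC c l g N"
  shows "dA g = 0"
proof -
  obtain S where bc: "bimod_conn c l N S" and tf: "torsion_free c l N"
    and mc: "metric_compat c l g N S"
    using Q by (auto simp: QLC_def)
  have N: "left_conn c l N"
    using bc by (simp add: bimod_conn_def)
  have "N 1 = 0"
    using N tf by (simp add: torsion_free_iff_N_one)
  moreover have "N g = dA g"
    using N tf g by (simp add: torsion_free_iff_eq_dA)
  moreover have "S 0 = 0"
    using bimod_conn_sigma_eq_uminus[OF N tf bc zero_in_Alg] by simp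
  ultimately show ?thesis
    using mc g by (simp add: metric_compat_def t12_def t21_def)
qed

lemma QLC_dA: "QLC c l [:t:] dA"
  unfolding QLC_def
  by (intro exI[of _ uminus] conjI bimod_conn_uminus left_conn_dA torsion_free_dA)
    (simp add: metric_compat_def dA_def t12_def t21_def)

lemma QLC_exists_iff_const:
  assumes g: "g \<in> Alg c l" and inv: "invertibleA c l g"
  shows "(\<exists>N. QLC c l g N) \<longleftrightarrow> (\<exists>t. t \<noteq> 0 \<and> g = [:t:])"
proof
  assume "\<exists>N. QLC c l g N"
  then have "g = [:coeff g 0:]"
    using QLC_imp_dA_eq_0[OF g] Alg_eq_pCons[OF g] by (auto simp: dA_def)
  moreover have "g \<noteq> 0"
    using inv by (auto simp: invertibleA_def)
  ultimately show "\<exists>t. t \<noteq> 0 \<and> g = [:t:]"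
    by (metis pCons_0_0)
next
  assume "\<exists>t. t \<noteq> 0 \<and> g = [:t:]"
  then show "\<exists>N. QLC c l g N"
    using QLC_dA by blast
qed

text \<open>If \<open>g h = 1\<close>, the inverse metric is \<open>(k \<omega>\<otimes>\<omega>) \<mapsto> k th(h)\<close>.\<close>
lemma is_qmetric_if_invertible:
  assumes g: "g \<in> Alg c l" and inv: "invertibleA c l g"
  shows "is_qmetric c l g"
proof -
  obtain h where h: "h \<in> Alg c l" and gh: "mA c l g h = 1"
    using inv by (auto simp: invertibleA_def)
  have th_h: "th c h \<in> Alg c l"
    by simp
  let ?B = "\<lambda>k. mA c l k (th c h)"
  show ?thesis
    unfolding is_qmetric_def
  proof (intro exI[of _ ?B] conjI ballI)
    fix k k' assume "k \<in> Alg c l" "k' \<in> Alg c l"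
    then show "?B (k + k') = ?B k + ?B k'"
      using th_h by (rule mA_add_left)
  next
    fix a k assume "a \<in> Alg c l" "k \<in> Alg c l"
    then show "?B (mA c l a k) = mA c l a (?B k)"
      using th_h by (rule mA_assoc)
  next
    fix a k assume a: "a \<in> Alg c l" and k: "k \<in> Alg c l"
    have "?B (rT c l k a) = mA c l k (mA c l a (th c h))"
      using a k th_h by (simp add: rT_def mA_assoc)
    also have "\<dots> = mA c l (?B k) a"
      using a k th_h by (simp add: mA_assoc mA_commute[of a])
    finally show "?B (rT c l k a) = mA c l (?B k) a" .
  next
    fix e assume e: "e \<in> Alg c l"
    have "?B (tns c l e g) = mA c l e (th c (mA c l g h))"
      using e g h by (simp add: tns_def mA_assoc th_mA)
    then show "mA c l (?B (tns c l e g)) 1 = e"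
      using e by (simp add: gh)
  next
    fix e assume e: "e \<in> Alg c l"
    have "rOm c l g (?B (tns c l 1 e)) = mA c l g (mA c l e h)"
      using e h by (simp add: rOm_def tns_def th_mA[symmetric] th_th[OF mA_in_Alg])
    also have "\<dots> = mA c l (mA c l g e) h"
      using e g h by (simp add: mA_assoc)
    also have "\<dots> = mA c l e (mA c l g h)"
      using e g h by (simp add: mA_commute[of g] mA_assoc)
    finally show "rOm c l g (?B (tns c l 1 e)) = e"
      using e by (simp add: gh)
  qed (simp)
qed

theorem mainTheorem2:
  fixes c :: bool and l :: "'k::field"
  shows
    "vol_central c l \<and>
     (\<forall>h\<in>Alg c l. central_T c l h) \<and>
     (\<forall>h\<in>Alg c l. h \<noteq> 0 \<longrightarrow> \<not> qsym c l h) \<and>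
     (\<exists>N. left_conn c l N \<and> torsion_free c l N) \<and>
     (\<forall>N. left_conn c l N \<longrightarrow> (torsion_free c l N \<longleftrightarrow> N 1 = 0)) \<and>
     (\<forall>N. left_conn c l N \<and> torsion_free c l N \<longrightarrow>
         bimod_conn c l N (\<lambda>h. - h) \<and>
         (\<forall>S. bimod_conn c l N S \<longrightarrow> S 1 = - 1)) \<and>
     (\<forall>g\<in>Alg c l. invertibleA c l g \<longrightarrow>
         is_qmetric c l g \<and>
         ((\<exists>N. QLC c l g N) \<longleftrightarrow> (\<exists>t. t \<noteq> 0 \<and> g = [:t:])) \<and>
         (\<forall>N. QLC c l g N \<longrightarrow> N 1 = 0) \<and>
         (\<forall>N N'. QLC c l g N \<and> QLC c l g N' \<longrightarrow> (\<forall>q\<in>Alg c l. N q = N' q)))"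
proof (intro conjI allI ballI impI)
  show "vol_central c l"
    by (rule Vol_central)
  show "central_T c l h" if "h \<in> Alg c l" for h
    using that by (rule central_T_all)
  show "\<not> qsym c l h" if "h \<in> Alg c l" "h \<noteq> 0" for h
    using that by (rule not_qsym)
  show "\<exists>N. left_conn c l N \<and> torsion_free c l N"
    using left_conn_dA torsion_free_dA by blast
  show "torsion_free c l N \<longleftrightarrow> N 1 = 0" if "left_conn c l N" for N
    using that by (rule torsion_free_iff_N_one)
  fix N assume "left_conn c l N \<and> torsion_free c l N"
  then show "bimod_conn c l N uminus"
    using bimod_conn_uminus by blast
  show "S 1 = - 1" if "bimod_conn c l N S" for S
    using \<open>left_conn c l N \<and> torsion_free c l N\<close> bimod_conn_sigma_eq_uminus[OF _ _ that one_in_Alg]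
    by blast
next
  fix g assume g: "g \<in> Alg c l" and inv: "invertibleA c l g"
  show "is_qmetric c l g"
    using g inv by (rule is_qmetric_if_invertible)
  show "(\<exists>N. QLC c l g N) \<longleftrightarrow> (\<exists>t. t \<noteq> 0 \<and> g = [:t:])"
    using g inv by (rule QLC_exists_iff_const)
  show "N 1 = 0" if "QLC c l g N" for N
    using QLC_eq_dA[OF that one_in_Alg] by (simp add: dA_def)
  show "N q = N' q" if "QLC c l g N \<and> QLC c l g N'" "q \<in> Alg c l" for N N' q
    using that by (auto simp: QLC_eq_dA)
qed

end
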